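(* In any execution of $\mathcal{U}$, for every operation $o$: if $h(o) = (t(o), NULL)$ at time $T$ and $o$ is not done at time $T' \geq T$, then $h(o) = (t(o), NULL)$ throughout the interval $[T, T']$.
   Context: Model: an asynchronous shared-memory system with possibly infinitely many processes, any of which may crash, communicating via atomic shared objects. A fetch-and-increment (F\&I) object stores an integer; F\&I$(C)$ atomically returns the current value and increments it. A generalized-compare-and-swap (GCAS) object $O$ stores a value and supports Read$(O)$ and GCAS$(c, O, v_1, v_2)$, which atomically does: if $c(\text{current value of } O, v_1)$ holds then set $O := v_2$ and return true, else return false. Tuples are compared componentwise for $=$; GCAS$(>, A, (t,-,-), v)$ succeeds iff the time field of $A$ is strictly greater than $t$. Implemented type $\mathcal{T} = (OP, RES, Q, \delta)$ with initial state $s_0$; a procedure $apply_{\mathcal{T}}(o,s)$ returns some $(s',r)$ with $(s,o,s',r)\in\delta$. $NULL$ is a value different from every response of $\mathcal{T}$, and $NOOP$ is a name different from every operation of $\mathcal{T}$. Algorithm $\mathcal{U}$: each process $p$ owns a GCAS object $H_p$ with fields $(time, response)$. Shared objects: F\&I object $C$, initially $1$; GCAS object $A$ with fields $(time, op, ptr)$, initially $(0, NOOP, h(NOOP))$, where $h(NOOP)$ is a pointer to an immutable location containing $(0,\perp)$; GCAS object $S$ with fields $(time, state, response, ptr)$, initially $(0, s_0, \perp, h(NOOP))$. Process $p$ performs operation $o$ by calling DoOp$(o)$: (1) DoOp$(o)$ invoked; (2) $t := $ F\&I$(C)$; (3) $H_p := (t, NULL)$; (4) while $H_p = (t, NULL)$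 do: (5) $(t^*, s^*, r^*, roptr^* ) := S$; (6) GCAS$(=, *roptr^*, (t^*, NULL), (t^*, r^* ))$; (7) GCAS$(>, A, (t,-,-), (t, o, \&H_p))$; (8) $(t', o', roptr') := A$; (9) $(\hat t, \hat r) := *roptr'$; (10) if $(\hat t,\hat r) = (t', NULL)$ then (11) $(s', r') := apply_{\mathcal{T}}(o', s^* )$; (12) GCAS$(=, S, (t^*,s^*,r^*,roptr^* ), (t', s', r', roptr'))$; (13) else GCAS$(=, A, (t', o', roptr'), (t, o, \&H_p))$; end while; (14) return $H_p.response$. Notation: an "operation" $o$ means one invocation of DoOp$(o)$. $p(o)$ is the process executing it; $t(o)$ is the value returned by its F\&I at line 2, or $\infty$ if line 2 has not been executed; $h(o)$ is $H_{p(o)}$. Operation $o$ is done at time $T$ if at some time $T'\le T$, $h(o) = (t(o), r)$ with $r \neq NULL$. *)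

theory Defs
  imports Main
begin

text \<open>Model of the asynchronous shared-memory algorithm U (universal construction
  from fetch-and-increment and generalized compare-and-swap).
  Type parameters: 'p processes (possibly infinitely many), 'o operations of the
  implemented type T, 's states of T, 'r responses of T.\<close>

datatype 'o opn = NOOP | Op 'o

text \<open>Response values stored in H and S: NULL and Bot (the initial placeholder)
  are distinct from every response of T.\<close>
datatype 'r rv = NULL | Bot | Resp 'r

text \<open>Pointers: h(NOOP) (immutable location containing (0,Bot)) or the address of H_p.\<close>
datatype 'p ptr = HNOOP | HPtr 'p

text \<open>Program counter: Idle (no operation in progress; next step invokes DoOp, line 1),
  L2 .. L14 = the next line to execute.\<close>
datatype pcv = Idle | L2 | L3 | L4 | L5 | L6 | L7 | L8 | L9 | L10 | L11 | L12 | L13 | L14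

record ('p, 'o, 's, 'r) loc =
  lo :: 'o               \<comment> \<open>argument o of DoOp\<close>
  lt :: nat
  ts :: nat
  ss :: 's
  rs :: "'r rv"
  ps :: "'p ptr"
  t1 :: nat
  o1 :: "'o opn"
  p1 :: "'p ptr"
  th :: nat
  rh :: "'r rv"
  sn :: 's
  rn :: 'r

text \<open>Global configuration. ninv and tof are ghost (history) variables:
  ninv p = number of DoOp invocations started by p (the k-th invocation, k \<ge> 1, is
  the operation (p,k)); tof p k = Some t iff operation (p,k) has executed line 2 and
  its F&I returned t (i.e. t(o) = t), None iff t(o) = \<infinity>.\<close>
record ('p, 'o, 's, 'r) conf =
  Cv :: nat
  Av :: "nat \<times> 'o opn \<times> 'p ptr"
  Sv :: "nat \<times> 's \<times> 'r rv \<times> 'p ptr"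
  Hv :: "'p \<Rightarrow> nat \<times> 'r rv"
  pc :: "'p \<Rightarrow> pcv"
  lv :: "'p \<Rightarrow> ('p, 'o, 's, 'r) loc"
  ninv :: "'p \<Rightarrow> nat"
  tof :: "'p \<Rightarrow> nat \<Rightarrow> nat option"

definition init_conf :: "'s \<Rightarrow> ('p, 'o, 's, 'r) conf" where
  "init_conf s0 = \<lparr> Cv = 1, Av = (0, NOOP, HNOOP), Sv = (0, s0, Bot, HNOOP),
     Hv = (\<lambda>_. (0, Bot)), pc = (\<lambda>_. Idle), lv = (\<lambda>_. undefined),
     ninv = (\<lambda>_. 0), tof = (\<lambda>_ _. None) \<rparr>"

fun deref :: "('p, 'o, 's, 'r) conf \<Rightarrow> 'p ptr \<Rightarrow> nat \<times> 'r rv" where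
  "deref c HNOOP = (0, Bot)"
| "deref c (HPtr q) = Hv c q"

definition goto :: "'p \<Rightarrow> pcv \<Rightarrow> ('p, 'o, 's, 'r) conf \<Rightarrow> ('p, 'o, 's, 'r) conf" where
  "goto p l c = c\<lparr>pc := (pc c)(p := l)\<rparr>"

definition setl :: "'p \<Rightarrow> (('p, 'o, 's, 'r) loc \<Rightarrow> ('p, 'o, 's, 'r) loc)
    \<Rightarrow> ('p, 'o, 's, 'r) conf \<Rightarrow> ('p, 'o, 's, 'r) conf" where
  "setl p f c = c\<lparr>lv := (lv c)(p := f (lv c p))\<rparr>"

text \<open>One atomic step of process p (executing one line). delta is the transition
  relation of T, a set of tuples (s, o, s', r).\<close>
inductive step :: "('s \<times> 'o \<times> 's \<times> 'r) set \<Rightarrow> 'p \<Rightarrow>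
    ('p, 'o, 's, 'r) conf \<Rightarrow> ('p, 'o, 's, 'r) conf \<Rightarrow> bool"
  for \<delta> :: "('s \<times> 'o \<times> 's \<times> 'r) set" and p :: 'p where
  line1: "pc c p = Idle \<Longrightarrow>
     step \<delta> p c (goto p L2 (setl p (\<lambda>l. l\<lparr>lo := op1\<rparr>) (c\<lparr>ninv := (ninv c)(p := Suc (ninv c p))\<rparr>)))"
| line2: "pc c p = L2 \<Longrightarrow>
     step \<delta> p c (goto p L3 (setl p (\<lambda>l. l\<lparr>lt := Cv c\<rparr>)
        (c\<lparr>Cv := Suc (Cv c), tof := (tof c)(p := (tof c p)(ninv c p := Some (Cv c)))\<rparr>)))"
| line3: "pc c p = L3 \<Longrightarrow>
     step \<delta> p c (goto p L4 (c\<lparr>Hv := (Hv c)(p := (lt (lv c p), NULL))\<rparr>))"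
| line4_loop: "pc c p = L4 \<Longrightarrow> Hv c p = (lt (lv c p), NULL) \<Longrightarrow> step \<delta> p c (goto p L5 c)"
| line4_exit: "pc c p = L4 \<Longrightarrow> Hv c p \<noteq> (lt (lv c p), NULL) \<Longrightarrow> step \<delta> p c (goto p L14 c)"
| line5: "pc c p = L5 \<Longrightarrow> Sv c = (a, b, d, e) \<Longrightarrow>
     step \<delta> p c (goto p L6 (setl p (\<lambda>l. l\<lparr>ts := a, ss := b, rs := d, ps := e\<rparr>) c))"
| line6_succ: "pc c p = L6 \<Longrightarrow> ps (lv c p) = HPtr q \<Longrightarrow> Hv c q = (ts (lv c p), NULL) \<Longrightarrow>
     step \<delta> p c (goto p L7 (c\<lparr>Hv := (Hv c)(q := (ts (lv c p), rs (lv c p)))\<rparr>))"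
| line6_fail: "pc c p = L6 \<Longrightarrow> deref c (ps (lv c p)) \<noteq> (ts (lv c p), NULL) \<Longrightarrow>
     step \<delta> p c (goto p L7 c)"
| line7_succ: "pc c p = L7 \<Longrightarrow> fst (Av c) > lt (lv c p) \<Longrightarrow>
     step \<delta> p c (goto p L8 (c\<lparr>Av := (lt (lv c p), Op (lo (lv c p)), HPtr p)\<rparr>))"
| line7_fail: "pc c p = L7 \<Longrightarrow> \<not> fst (Av c) > lt (lv c p) \<Longrightarrow> step \<delta> p c (goto p L8 c)"
| line8: "pc c p = L8 \<Longrightarrow> Av c = (a, b, e) \<Longrightarrow>
     step \<delta> p c (goto p L9 (setl p (\<lambda>l. l\<lparr>t1 := a, o1 := b, p1 := e\<rparr>) c))"
| line9: "pc c p = L9 \<Longrightarrow> deref c (p1 (lv c p)) = (a, d) \<Longrightarrow>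
     step \<delta> p c (goto p L10 (setl p (\<lambda>l. l\<lparr>th := a, rh := d\<rparr>) c))"
| line10_then: "pc c p = L10 \<Longrightarrow> (th (lv c p), rh (lv c p)) = (t1 (lv c p), NULL) \<Longrightarrow>
     step \<delta> p c (goto p L11 c)"
| line10_else: "pc c p = L10 \<Longrightarrow> (th (lv c p), rh (lv c p)) \<noteq> (t1 (lv c p), NULL) \<Longrightarrow>
     step \<delta> p c (goto p L13 c)"
| line11: "pc c p = L11 \<Longrightarrow> o1 (lv c p) = Op x \<Longrightarrow> (ss (lv c p), x, s', r') \<in> \<delta> \<Longrightarrow>
     step \<delta> p c (goto p L12 (setl p (\<lambda>l. l\<lparr>sn := s', rn := r'\<rparr>) c))"
| line12_succ: "pc c p = L12 \<Longrightarrow> Sv c = (ts (lv c p), ss (lv c p), rs (lv c p), ps (lv c p)) \<Longrightarrow>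
     step \<delta> p c (goto p L4 (c\<lparr>Sv := (t1 (lv c p), sn (lv c p), Resp (rn (lv c p)), p1 (lv c p))\<rparr>))"
| line12_fail: "pc c p = L12 \<Longrightarrow> Sv c \<noteq> (ts (lv c p), ss (lv c p), rs (lv c p), ps (lv c p)) \<Longrightarrow>
     step \<delta> p c (goto p L4 c)"
| line13_succ: "pc c p = L13 \<Longrightarrow> Av c = (t1 (lv c p), o1 (lv c p), p1 (lv c p)) \<Longrightarrow>
     step \<delta> p c (goto p L4 (c\<lparr>Av := (lt (lv c p), Op (lo (lv c p)), HPtr p)\<rparr>))"
| line13_fail: "pc c p = L13 \<Longrightarrow> Av c \<noteq> (t1 (lv c p), o1 (lv c p), p1 (lv c p)) \<Longrightarrow>
     step \<delta> p c (goto p L4 c)"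
| line14: "pc c p = L14 \<Longrightarrow> step \<delta> p c (goto p Idle c)"

text \<open>An execution: an infinite sequence of configurations indexed by time, starting
  in the initial configuration; at each time either nothing happens (stuttering, which
  also models crashed / slow processes and finite executions) or one process takes
  one atomic step.\<close>
definition execution :: "('s \<times> 'o \<times> 's \<times> 'r) set \<Rightarrow> 's \<Rightarrow>
    (nat \<Rightarrow> ('p, 'o, 's, 'r) conf) \<Rightarrow> bool" where
  "execution \<delta> s0 ex \<longleftrightarrow> ex 0 = init_conf s0 \<and>
     (\<forall>i. ex (Suc i) = ex i \<or> (\<exists>p. step \<delta> p (ex i) (ex (Suc i))))"

definition op_done :: "(nat \<Rightarrow> ('p, 'o, 's, 'r) conf) \<Rightarrow> 'p \<Rightarrow> nat \<Rightarrow> nat \<Rightarrow> bool" where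
  "op_done ex p k T \<longleftrightarrow>
     (\<exists>T'\<le>T. \<exists>t r. tof (ex T') p k = Some t \<and> Hv (ex T') p = (t, r) \<and> r \<noteq> NULL)"

end

theory Submission imports Defs begin

text \<open>While H_p holds (t, NULL), process p is inside its while loop with local t, so p
  itself never writes H_p. Any other process can only write H_p at line 6, and it
  copies a response read from S, which is never NULL; the time field stays t. Hence
  H_p keeps the form (t, _), and once the response becomes non-NULL the operation is
  done. The ticket t(o) itself never changes once assigned, because line 2 only
  writes the slot of the current, still unticketed invocation.\<close>

definition responses_non_null :: "('p, 'o, 's, 'r) conf \<Rightarrow> bool" where
  "responses_non_null c \<longleftrightarrow>
     fst (snd (snd (Sv c))) \<noteq> NULL \<and> (\<forall>q. pc c q = L6 \<longrightarrow> rs (lv c q) \<noteq> NULL)"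

definition pending_in_loop :: "('p, 'o, 's, 'r) conf \<Rightarrow> bool" where
  "pending_in_loop c \<longleftrightarrow> (\<forall>q. snd (Hv c q) = NULL \<longrightarrow>
     pc c q \<notin> {Idle, L2, L3, L14} \<and> fst (Hv c q) = lt (lv c q))"

definition fresh_ticket_slots :: "('p, 'o, 's, 'r) conf \<Rightarrow> bool" where
  "fresh_ticket_slots c \<longleftrightarrow> (\<forall>q j.
     ninv c q < j \<or> (j = ninv c q \<and> pc c q = L2) \<longrightarrow> tof c q j = None)"

lemma execution_invariant:
  assumes "execution \<delta> s0 ex"
    and "I (init_conf s0)"
    and "\<And>q c c'. step \<delta> q c c' \<Longrightarrow> I c \<Longrightarrow> I c'"
  shows "I (ex i)"
proof (induction i)
  case 0
  then show ?case using assms(1,2) by (simp add: execution_def)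
next
  case (Suc i)
  then show ?case using assms(1,3) unfolding execution_def by metis
qed

lemma step_responses_non_null:
  "step \<delta> q c c' \<Longrightarrow> responses_non_null c \<Longrightarrow> responses_non_null c'"
  by (induction rule: step.induct) (auto simp: responses_non_null_def goto_def setl_def)

lemma step_pending_in_loop:
  "step \<delta> q c c' \<Longrightarrow> responses_non_null c \<Longrightarrow> pending_in_loop c \<Longrightarrow> pending_in_loop c'"
proof (induction rule: step.induct)
  case (line4_exit c)
  then show ?case by (auto simp: pending_in_loop_def goto_def) (metis prod.collapse)
qed (auto simp: responses_non_null_def pending_in_loop_def goto_def setl_def)

lemma step_fresh_ticket_slots:
  "step \<delta> q c c' \<Longrightarrow> fresh_ticket_slots c \<Longrightarrow> fresh_ticket_slots c'"
  by (induction rule: step.induct) (auto simp: fresh_ticket_slots_def goto_def setl_def)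

lemma execution_invariants:
  assumes "execution \<delta> s0 ex"
  shows "responses_non_null (ex i) \<and> pending_in_loop (ex i) \<and> fresh_ticket_slots (ex i)"
  using assms
proof (rule execution_invariant)
  show "responses_non_null (init_conf s0) \<and> pending_in_loop (init_conf s0) \<and>
      fresh_ticket_slots (init_conf s0)"
    by (simp add: init_conf_def responses_non_null_def pending_in_loop_def fresh_ticket_slots_def)
qed (metis step_responses_non_null step_pending_in_loop step_fresh_ticket_slots)

lemma step_preserves_ticket:
  "step \<delta> q c c' \<Longrightarrow> fresh_ticket_slots c \<Longrightarrow> tof c p k = Some t \<Longrightarrow> tof c' p k = Some t"
  by (induction rule: step.induct) (auto simp: fresh_ticket_slots_def goto_def setl_def)

lemma step_preserves_pending_time:
  "step \<delta> q c c' \<Longrightarrow> pending_in_loop c \<Longrightarrow> Hv c p = (t, NULL) \<Longrightarrow> fst (Hv c' p) = t"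
  by (induction rule: step.induct) (auto simp: pending_in_loop_def goto_def setl_def)

lemma execution_preserves_pending_ticket:
  assumes "execution \<delta> s0 ex"
    and "tof (ex i) p k = Some t"
    and "Hv (ex i) p = (t, NULL)"
  shows "tof (ex (Suc i)) p k = Some t \<and> fst (Hv (ex (Suc i)) p) = t"
proof -
  have inv: "pending_in_loop (ex i)" "fresh_ticket_slots (ex i)"
    using execution_invariants[OF assms(1)] by blast+
  from assms(1) consider "ex (Suc i) = ex i" | q where "step \<delta> q (ex i) (ex (Suc i))"
    unfolding execution_def by blast
  then show ?thesis
  proof cases
    case 1
    then show ?thesis using assms(2,3) by simp
  next
    case (2 q)
    then show ?thesis
      using step_preserves_ticket[OF 2 inv(2) assms(2)]
        step_preserves_pending_time[OF 2 inv(1) assms(3)] by blast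
  qed
qed

theorem mainTheorem8:
  fixes \<delta> :: "('s \<times> 'o \<times> 's \<times> 'r) set" and s0 :: 's
    and ex :: "nat \<Rightarrow> ('p, 'o, 's, 'r) conf"
    and p :: 'p and k t T T' :: nat
  assumes "execution \<delta> s0 ex"
    and "T \<le> T'"
    and "tof (ex T) p k = Some t"
    and "Hv (ex T) p = (t, NULL)"
    and "\<not> op_done ex p k T'"
  shows "\<forall>U. T \<le> U \<and> U \<le> T' \<longrightarrow> Hv (ex U) p = (t, NULL)"
proof (intro allI impI, elim conjE)
  fix U assume "T \<le> U" "U \<le> T'"
  then have "tof (ex U) p k = Some t \<and> Hv (ex U) p = (t, NULL)"
  proof (induction U rule: dec_induct)
    case base
    then show ?case using assms(3,4) by simp
  next
    case (step n)
    then have "tof (ex (Suc n)) p k = Some t" "fst (Hv (ex (Suc n)) p) = t"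
      using execution_preserves_pending_ticket[OF assms(1)] by auto
    moreover have "snd (Hv (ex (Suc n)) p) = NULL"
      using assms(5) step.prems calculation unfolding op_done_def by (metis prod.collapse)
    ultimately show ?case by (simp add: prod_eq_iff)
  qed
  then show "Hv (ex U) p = (t, NULL)" by simp
qed

end
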